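(* Let $N_1\ge\cdots\ge N_C\ge1$ be class sizes with $N=\sum_y N_y$ and $\pi_y=N_y/N$. Suppose the local Lipschitz constants satisfy $\mu_y=c\,N_y^{-\kappa}$ for a constant $c>0$ and $\kappa>1$, let $\mu=\max_y\mu_y$ be the corresponding global Lipschitz constant, and suppose the empirical complexities scale as $\hat{\mathfrak{C}}_{\mathcal{S}}(\mathcal{F})=K/\sqrt{N}$ and $\hat{\mathfrak{C}}_{\mathcal{S}_y}(\mathcal{F})=K/\sqrt{N_y}$ for a constant $K>0$. Then the complexity term of the data-dependent bound is no larger than that of the union bound: $$\frac{\hat{\mathfrak{C}}_{\mathcal{S}}(\mathcal{F})}{C\pi_C}\sum_{y=1}^C\mu_y\sqrt{\pi_y}\;\le\;\frac{\mu}{C}\sum_{y=1}^C\hat{\mathfrak{C}}_{\mathcal{S}_y}(\mathcal{F}).$$ That is, the data-dependent bound (with complexity term on the left) is sharper than the union bound (with complexity term on the right).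
   Context: Context: two generalization bounds for the balanced risk in imbalanced classification with $C$ classes are compared. The union bound has complexity term $\frac{\mu}{C}\sum_y\hat{\mathfrak{C}}_{\mathcal{S}_y}(\mathcal{F})$, obtained by bounding each class separately with a loss that is Lipschitz with global constant $\mu$; the data-dependent bound has complexity term $\frac{\hat{\mathfrak{C}}_{\mathcal{S}}(\mathcal{F})}{C\pi_C}\sum_y\mu_y\sqrt{\pi_y}$, where $\mu_y$ are local Lipschitz constants: $|L(f(\boldsymbol{x}),y)-L(f'(\boldsymbol{x}),y)|\le\mu_y\|f(\boldsymbol{x})-f'(\boldsymbol{x})\|_2$ for all $\boldsymbol{x}\in\mathcal{S}_y$. Here $\hat{\mathfrak{C}}_{\mathcal{S}}(\mathcal{F})$ denotes the empirical (Rademacher-type) complexity of the score-function class $\mathcal{F}$ on the whole training set $\mathcal{S}$ and $\hat{\mathfrak{C}}_{\mathcal{S}_y}(\mathcal{F})$ that on the class-$y$ subsample $\mathcal{S}_y$ of size $N_y$. *)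

theory Defs
  imports "HOL-Analysis.Analysis"
begin

end

theory Submission
  imports Defs
begin

text \<open>After the factors of \<open>N\<close> cancel, the term of
  class \<open>y\<close> on the left is \<open>K c N\<^sub>y powr (1 - \<kappa>) / (C N\<^sub>C sqrt N\<^sub>y)\<close>, while
  \<open>\<mu> \<ge> \<mu>\<^sub>C\<close> bounds the term on the right from below by
  \<open>K c N\<^sub>C powr (1 - \<kappa>) / (C N\<^sub>C sqrt N\<^sub>y)\<close>. As \<open>N\<^sub>C\<close> is the smallest class size and
  \<open>\<kappa> \<ge> 1\<close>, the power \<open>1 - \<kappa>\<close> is antitone and the left term is the smaller.\<close>

lemma balanced_class_term_le_union_class_term:
  fixes C K N M c k m n :: real
  assumes C: "0 < C" and N: "0 < N" and m: "0 < m" and mn: "m \<le> n" and k: "1 \<le> k"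
    and K: "0 \<le> K" and c: "0 \<le> c" and M: "c * m powr (-k) \<le> M"
  shows "K / sqrt N / (C * (m / N)) * (c * n powr (-k) * sqrt (n / N)) \<le> M / C * (K / sqrt n)"
proof -
  have n: "0 < n" using m mn by linarith
  have decay: "n powr (1 - k) \<le> m powr (1 - k)"
    by (rule powr_mono2') (use k m mn in auto)
  have "K / sqrt N / (C * (m / N)) * (c * n powr (-k) * sqrt (n / N))
      = K * c / C * (n powr (1 - k) / (m * sqrt n))"
  proof -
    have "sqrt N * sqrt N = N" "sqrt n * sqrt n = n" using N n by simp_all
    then show ?thesis
      using N n m C by (simp add: powr_diff powr_minus_divide real_sqrt_divide field_simps)
  qed
  also have "\<dots> \<le> K * c / C * (m powr (1 - k) / (m * sqrt n))"
    by (intro mult_left_mono divide_right_mono decay) (use K c C m n in auto)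
  also have "\<dots> = c * m powr (-k) / C * (K / sqrt n)"
    using m by (simp add: powr_diff powr_minus_divide field_simps)
  also have "\<dots> \<le> M / C * (K / sqrt n)"
    by (intro mult_right_mono divide_right_mono M) (use C K n in auto)
  finally show ?thesis .
qed

theorem proposition2:
  fixes C :: nat and Ncl :: "nat \<Rightarrow> nat"
    and c \<kappa> K :: real
    and \<mu>y :: "nat \<Rightarrow> real" and \<mu> :: real
    and compS :: real and compSy :: "nat \<Rightarrow> real"
  assumes C_pos: "C \<ge> 1"
    and sizes_pos: "\<And>y. y \<in> {1..C} \<Longrightarrow> Ncl y \<ge> 1"
    and sizes_sorted: "\<And>y y'. y \<in> {1..C} \<Longrightarrow> y' \<in> {1..C} \<Longrightarrow> y \<le> y' \<Longrightarrow> Ncl y' \<le> Ncl y"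
    and c_pos: "c > 0" and kappa_gt: "\<kappa> > 1" and K_pos: "K > 0"
    and mu_local: "\<And>y. y \<in> {1..C} \<Longrightarrow> \<mu>y y = c * real (Ncl y) powr (-\<kappa>)"
    and mu_global: "\<mu> = Max (\<mu>y ` {1..C})"
    and compS_def: "compS = K / sqrt (real (\<Sum>y\<in>{1..C}. Ncl y))"
    and compSy_def: "\<And>y. y \<in> {1..C} \<Longrightarrow> compSy y = K / sqrt (real (Ncl y))"
  shows "(let N = real (\<Sum>y\<in>{1..C}. Ncl y); \<pi> = (\<lambda>y. real (Ncl y) / N) in
           compS / (real C * \<pi> C) * (\<Sum>y\<in>{1..C}. \<mu>y y * sqrt (\<pi> y)))
         \<le> \<mu> / real C * (\<Sum>y\<in>{1..C}. compSy y)"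
proof -
  define N where "N = real (\<Sum>y\<in>{1..C}. Ncl y)"
  have C_class: "C \<in> {1..C}" using C_pos by simp
  have smallest_pos: "0 < real (Ncl C)" using sizes_pos[OF C_class] by simp
  have "Ncl C \<le> (\<Sum>y\<in>{1..C}. Ncl y)" using C_class by (intro member_le_sum) auto
  then have N_pos: "0 < N" using smallest_pos unfolding N_def by linarith
  have mu_ge_smallest: "c * real (Ncl C) powr (-\<kappa>) \<le> \<mu>"
    unfolding mu_global mu_local[OF C_class, symmetric] using C_class by simp
  have "compS / (real C * (real (Ncl C) / N)) * (\<Sum>y\<in>{1..C}. \<mu>y y * sqrt (real (Ncl y) / N))
      = (\<Sum>y\<in>{1..C}. compS / (real C * (real (Ncl C) / N)) * (\<mu>y y * sqrt (real (Ncl y) / N)))"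
    by (simp add: sum_distrib_left)
  also have "\<dots> \<le> (\<Sum>y\<in>{1..C}. \<mu> / real C * compSy y)"
    unfolding compS_def N_def[symmetric]
    using C_pos N_pos smallest_pos kappa_gt K_pos c_pos mu_ge_smallest
    by (intro sum_mono, simp only: mu_local compSy_def)
       (intro balanced_class_term_le_union_class_term, auto intro: sizes_sorted)
  also have "\<dots> = \<mu> / real C * (\<Sum>y\<in>{1..C}. compSy y)"
    by (simp add: sum_distrib_left)
  finally show ?thesis unfolding Let_def N_def .
qed

end
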